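(* Let $A$ be a $d\times d$ $\{0,1\}$-matrix and $\mathbb{F}\in\{\mathbb{R},\mathbb{C}\}$. For $K\in\mathcal{STAF}(A)$ and $n\in\mathbb{N}$ let $\mathbf{K}^{(n)}\in\mathbb{F}^d$ have $j$-th component $K(s_0\dots s_{n-1}j)$ for any allowable block $s_0\dots s_{n-1}j$ (for $n=0$, $K(j)$). Then $\mathbf{K}=(\mathbf{K}^{(0)},\mathbf{K}^{(1)},\dots)$ is a thread of $A$, and $K\mapsto\mathbf{K}$ is a vector space isomorphism from $\mathcal{STAF}(A)$ onto $\varprojlim(\mathbb{F}^d,A)$. Moreover $\varprojlim(\mathbb{F}^d,A)$ is isomorphic to $NonN(A,\mathbb{F}^d)$.
   Context: Symbols are $S=\{1,\dots,d\}$; $i\to j$ is an allowable transition iff $A_{ij}=1$. An allowable block is a finite word $s_0\dots s_{n-1}$ with $s_k\to s_{k+1}$ for all $k$; its length is the number of symbols; $\mathcal{B}(A)$ is the set of allowable blocks. A symbolic transverse arc function (staf) is a map $K:\mathcal{B}(A)\to\mathbb{F}$ which is additive, $K(s_0\dots s_{n-1}j)=\sum_{k:\,j\to k}K(s_0\dots s_{n-1}jk)$ for every allowable block $s_0\dots s_{n-1}j$, and coherent, $K(s_0\dots s_nj)=K(s_0'\dots s_n'j)$ for all allowable blocks of the same length ending in the same symbol. $\mathcal{STAF}(A)$ is the vector space of stafs. A thread of $A$ is a sequence $(\vec v_0,\vec v_1,\dots)$ in $\mathbb{F}^d$ with $\vec v_n=A\vec v_{n+1}$ for all $n$; $\varprojlim(\mathbb{F}^d,A)$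 is the space of threads. $NonN(A,\mathbb{F}^d)$ is the sum of the generalized eigenspaces of $A$ for nonzero eigenvalues. *)

theory Defs
  imports "HOL-Analysis.Analysis"
begin

text \<open>Symbols are the elements of a finite type 'n (so d = CARD('n)).
  The {0,1}-matrix A is given as a real matrix with entries 0 or 1;
  i \<rightarrow> j iff A$i$j = 1.  Over a field 'f (real or complex) it acts
  through the entrywise embedding.\<close>

definition fmat :: "real^'n^'n \<Rightarrow> ('f::real_algebra_1)^'n^'n" where
  "fmat A = (\<chi> i j. of_real (A$i$j))"

definition allowable :: "real^'n^'n \<Rightarrow> 'n list \<Rightarrow> bool" where
  "allowable A xs \<longleftrightarrow> xs \<noteq> [] \<and> (\<forall>k. Suc k < length xs \<longrightarrow> A$(xs!k)$(xs!Suc k) = 1)"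

text \<open>Stafs: maps on allowable blocks (represented as functions on all words
  that vanish off the allowable blocks) that are additive and coherent.\<close>
definition staf_space :: "real^'n^'n \<Rightarrow> ('n list \<Rightarrow> 'f::field) set" where
  "staf_space A = {K.
     (\<forall>xs. \<not> allowable A xs \<longrightarrow> K xs = 0) \<and>
     (\<forall>w j. allowable A (w @ [j]) \<longrightarrow>
        K (w @ [j]) = (\<Sum>k\<in>{k. A$j$k = 1}. K (w @ [j, k]))) \<and>
     (\<forall>w w' j. allowable A (w @ [j]) \<and> allowable A (w' @ [j]) \<and> length w = length w'
        \<longrightarrow> K (w @ [j]) = K (w' @ [j]))}"

definition threads :: "real^'n^'n \<Rightarrow> (nat \<Rightarrow> ('f::real_algebra_1)^'n) set" where
  "threads A = {v. \<forall>n. v n = fmat A *v v (Suc n)}"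

definition represents :: "real^'n^'n \<Rightarrow> ('n list \<Rightarrow> 'f) \<Rightarrow> (nat \<Rightarrow> 'f^'n) \<Rightarrow> bool" where
  "represents A K v \<longleftrightarrow>
     (\<forall>n w j. allowable A (w @ [j]) \<and> length w = n \<longrightarrow> v n $ j = K (w @ [j]))"

definition thread_of :: "real^'n^'n \<Rightarrow> ('n list \<Rightarrow> 'f::real_algebra_1) \<Rightarrow> (nat \<Rightarrow> 'f^'n)" where
  "thread_of A K = (THE v. v \<in> threads A \<and> represents A K v)"

definition gen_eigenspace :: "complex^'n^'n \<Rightarrow> complex \<Rightarrow> (complex^'n) set" where
  "gen_eigenspace M e = {v. \<exists>k. ((\<lambda>x. (M - mat e) *v x) ^^ k) v = 0}"

definition NonN_complex :: "real^'n^'n \<Rightarrow> (complex^'n) set" where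
  "NonN_complex A = {v. \<exists>S f. finite S \<and> 0 \<notin> S \<and>
      (\<forall>e\<in>S. f e \<in> gen_eigenspace (fmat A) e) \<and> v = (\<Sum>e\<in>S. f e)}"

definition NonN_real :: "real^'n^'n \<Rightarrow> (real^'n) set" where
  "NonN_real A = {v. (\<chi> i. complex_of_real (v$i)) \<in> NonN_complex A}"

definition staf_thread_claim :: "real^'n^'n \<Rightarrow> (('f::{field,real_algebra_1})^'n) set \<Rightarrow> bool" where
  "staf_thread_claim A N \<longleftrightarrow>
     (\<forall>K \<in> (staf_space A :: ('n list \<Rightarrow> 'f) set).
        \<exists>!v. v \<in> threads A \<and> represents A K v) \<and>
     (\<forall>K \<in> (staf_space A :: ('n list \<Rightarrow> 'f) set). \<forall>L \<in> staf_space A. \<forall>c::'f.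
        thread_of A (\<lambda>x. K x + L x) = (\<lambda>n. thread_of A K n + thread_of A L n) \<and>
        thread_of A (\<lambda>x. c * K x) = (\<lambda>n. c *s thread_of A K n)) \<and>
     bij_betw (thread_of A) (staf_space A :: ('n list \<Rightarrow> 'f) set) (threads A) \<and>
     (\<exists>\<Psi> :: (nat \<Rightarrow> 'f^'n) \<Rightarrow> 'f^'n.
        (\<forall>v \<in> threads A. \<forall>u \<in> threads A. \<forall>c::'f.
           \<Psi> (\<lambda>n. v n + u n) = \<Psi> v + \<Psi> u \<and> \<Psi> (\<lambda>n. c *s v n) = c *s \<Psi> v) \<and>
        bij_betw \<Psi> (threads A) N)"

end

theory Submission
  imports Defs
    "HOL-Computational_Algebra.Fundamental_Theorem_Algebra"
    "HOL-Computational_Algebra.Polynomial_Factorial"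
    "HOL-Computational_Algebra.Field_as_Ring"
begin

text \<open>Let M be the matrix of A and d the number of symbols. By additivity, applying M to the
  values of a staf on the blocks of length n + 2 gives its values on the blocks of length
  n + 1, and by coherence these values form a vector, except at the symbols that end no
  block of length n + 1. Those symbols do not matter: a block of length d + 1 repeats a
  symbol and can be pumped, so after d applications of M only symbols with arbitrarily long
  pasts contribute. Hence the thread of K at n is M^d applied to the values of K on blocks
  of length n + d + 1, and a thread gives back a staf by reading off coordinates.

  A thread is determined by its head, which can be any point of the eventual range of M
  (the intersection of the ranges of its powers), as M is bijective there. This range is
  NonN(A): being injective on it, M allows an annihilating polynomial without the root 0,
  and primary decomposition splits the vector into generalised eigenvectors for its roots;
  conversely a Bezout identity between x^m and (x - e)^k puts every generalised eigenvector
  for e \<noteq> 0 into the range of M^m. Real vectors are handled by complexification.\<close>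

section \<open>Allowable blocks and their pasts\<close>

lemma allowable_iff_successively:
  "allowable A xs \<longleftrightarrow> xs \<noteq> [] \<and> successively (\<lambda>a b. A$a$b = 1) xs"
  unfolding allowable_def successively_conv_nth by auto

definition has_past :: "real^'n^'n \<Rightarrow> nat \<Rightarrow> 'n \<Rightarrow> bool" where
  "has_past A n j \<longleftrightarrow> (\<exists>w. allowable A (w @ [j]) \<and> length w = n)"

lemma has_past_mono:
  assumes "has_past A n j" "m \<le> n"
  shows "has_past A m j"
proof -
  obtain w where w: "allowable A (w @ [j])" "length w = n" using assms(1) has_past_def by blast
  have "take (n - m) w @ (drop (n - m) w @ [j]) = w @ [j]" by simp
  then have "allowable A (drop (n - m) w @ [j])"
    using w(1) unfolding allowable_iff_successively
    by (metis successively_append_iff snoc_eq_iff_butlast)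
  moreover have "length (drop (n - m) w) = m" using w(2) assms(2) by simp
  ultimately show ?thesis unfolding has_past_def by blast
qed

lemma has_past_extend:
  assumes "has_past A n y" "successively (\<lambda>a b. A$a$b = 1) (y # zs)"
  shows "has_past A (n + length zs) (last (y # zs))"
proof -
  obtain w where w: "allowable A (w @ [y])" "length w = n" using assms(1) has_past_def by blast
  have "successively (\<lambda>a b. A$a$b = 1) ((w @ [y]) @ zs)"
    using w(1) assms(2) unfolding allowable_iff_successively successively_append_iff
    by (cases zs) (auto simp: successively_Cons)
  moreover have "(w @ [y]) @ zs = (w @ butlast (y # zs)) @ [last (y # zs)]"
    by (metis append.assoc append_Cons append_Nil append_butlast_last_id list.distinct(1))
  ultimately have "allowable A ((w @ butlast (y # zs)) @ [last (y # zs)])"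
    by (simp add: allowable_iff_successively)
  moreover have "length (w @ butlast (y # zs)) = n + length zs" using w(2) by simp
  ultimately show ?thesis unfolding has_past_def by blast
qed

lemma has_past_cycle:
  assumes "successively (\<lambda>a b. A$a$b = 1) (c @ [y])" "c \<noteq> []" "hd c = y"
  shows "has_past A n y"
proof -
  have "allowable A (concat (replicate r c) @ [y])" for r
  proof (induction r)
    case (Suc r)
    have "hd (concat (replicate r c) @ [y]) = y" using assms(2,3) by (cases r) auto
    then have "successively (\<lambda>a b. A$a$b = 1) (c @ (concat (replicate r c) @ [y]))"
      using Suc assms(1,2) unfolding allowable_iff_successively successively_append_iff
      by (auto simp: last_append)
    then show ?case by (simp add: allowable_iff_successively)
  qed (simp add: allowable_iff_successively)
  moreover have "length (concat (replicate r c)) = r * length c" for r by (induction r) auto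
  ultimately have "has_past A (r * length c) y" for r unfolding has_past_def by metis
  moreover have "n \<le> n * length c" using assms(2) by (cases c) auto
  ultimately show ?thesis using has_past_mono by blast
qed

lemma has_past_last_of_long_block:
  fixes A :: "real^'n^'n"
  assumes "allowable A b" "CARD('n) < length b"
  shows "has_past A n (last b)"
proof -
  have "card (set b) \<le> CARD('n)" by (rule card_mono) simp_all
  then have "\<not> distinct b" using assms(2) distinct_card by fastforce
  then obtain xs ys zs y where b: "b = xs @ [y] @ ys @ [y] @ zs"
    using not_distinct_decomp by blast
  have sb: "successively (\<lambda>a b. A$a$b = 1) b" using assms(1) allowable_iff_successively by blast
  have "successively (\<lambda>a b. A$a$b = 1) ((y # ys) @ [y])"
    using sb unfolding b successively_append_iff by (auto simp: successively_Cons)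
  then have "has_past A n y" by (rule has_past_cycle) auto
  moreover have "successively (\<lambda>a b. A$a$b = 1) (y # zs)"
    using sb unfolding b successively_append_iff by (cases zs) (auto simp: successively_Cons)
  ultimately have "has_past A (n + length zs) (last (y # zs))" by (rule has_past_extend)
  then show ?thesis unfolding b using has_past_mono le_add1 by fastforce
qed

section \<open>Threads of a matrix and its eventual range\<close>

lemma linear_matrix_vector_mult_pow:
  "Vector_Spaces.linear (*s) (*s) (matrix_vector_mult (M :: 'a::field^'n^'n) ^^ m)"
proof (induction m)
  case 0
  then show ?case using vec.linear_id by (simp add: id_def)
next
  case (Suc m)
  have "matrix_vector_mult M ^^ Suc m = matrix_vector_mult M \<circ> (matrix_vector_mult M ^^ m)"
    by simp
  then show ?case
    using Vector_Spaces.linear_compose[OF Suc matrix_vector_mul_linear_gen[of M]] by metis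
qed

lemma linear_surj_on_imp_inj_on:
  fixes f :: "'a::field^'n \<Rightarrow> 'a^'n"
  assumes lf: "Vector_Spaces.linear (*s) (*s) f" and S: "vec.subspace S" and fS: "f ` S = S"
  shows "inj_on f S"
proof -
  interpret f: Vector_Spaces.linear "(*s)" "(*s)" f by (rule lf)
  obtain B where B: "B \<subseteq> S" "vec.independent B" "S \<subseteq> vec.span B" "card B = vec.dim S"
    using vec.basis_exists by blast
  have fin: "finite B" using B(2) vec.finiteI_independent by blast
  have sp: "S \<subseteq> vec.span (f ` B)"
    using fS B(3) f.span_image by blast
  have c1: "card (f ` B) \<le> card B" using fin by (rule card_image_le)
  have ind: "vec.independent (f ` B)"
    by (rule vec.card_le_dim_spanning[of _ S]) (use B fS fin c1 sp in auto)
  have "vec.dim S \<le> card (f ` B)" by (rule vec.dim_le_card[OF sp]) (use fin in auto)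
  then have "inj_on f B" using c1 B(4) by (intro eq_card_imp_inj_on[OF fin]) simp
  then have "inj_on f (vec.span B)" using f.inj_on_span_iff_independent_image[OF ind] by simp
  then show ?thesis using B(3) inj_on_subset by blast
qed

definition eventual_range :: "'a::semiring_1^'n^'n \<Rightarrow> ('a^'n) set" where
  "eventual_range M = (\<Inter>m. range (matrix_vector_mult M ^^ m))"

lemma range_matrix_vector_mult_pow_Suc:
  fixes M :: "'a::semiring_1^'n^'n"
  shows "range (matrix_vector_mult M ^^ Suc m) =
    matrix_vector_mult M ` range (matrix_vector_mult M ^^ m)"
  by (simp add: image_comp)

lemma range_matrix_vector_mult_pow_antimono:
  fixes M :: "'a::semiring_1^'n^'n"
  assumes "m \<le> k"
  shows "range (matrix_vector_mult M ^^ k) \<subseteq> range (matrix_vector_mult M ^^ m)"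
  using assms
proof (induction k rule: dec_induct)
  case (step k)
  have "(matrix_vector_mult M ^^ Suc k) x = (matrix_vector_mult M ^^ k) (M *v x)" for x
    by (simp add: funpow_swap1)
  then have "range (matrix_vector_mult M ^^ Suc k) \<subseteq> range (matrix_vector_mult M ^^ k)"
    by auto
  then show ?case using step.IH by blast
qed simp

lemma subspace_range_matrix_vector_mult_pow:
  "vec.subspace (range (matrix_vector_mult (M :: 'a::field^'n^'n) ^^ m))"
proof -
  interpret Vector_Spaces.linear "(*s)" "(*s)" "matrix_vector_mult M ^^ m"
    by (rule linear_matrix_vector_mult_pow)
  show ?thesis by (rule subspace_image) (rule vec.subspace_UNIV)
qed

text \<open>The ranges of the powers form a decreasing chain of subspaces; it stops at a
  power of minimal rank, since equal dimensions force equality.\<close>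

lemma range_matrix_vector_mult_pow_stabilises:
  fixes M :: "'a::field^'n^'n"
  obtains N where
    "\<And>k. N \<le> k \<Longrightarrow> range (matrix_vector_mult M ^^ k) = range (matrix_vector_mult M ^^ N)"
proof -
  let ?R = "\<lambda>m. range (matrix_vector_mult M ^^ m)"
  define N where "N = arg_min (\<lambda>m. vec.dim (?R m)) (\<lambda>_. True)"
  have N: "vec.dim (?R N) \<le> vec.dim (?R m)" for m
    unfolding N_def by (rule arg_min_nat_le) simp
  have Suc_N: "?R (Suc N) = ?R N"
    by (rule vec.subspace_dim_equal[OF subspace_range_matrix_vector_mult_pow
          subspace_range_matrix_vector_mult_pow range_matrix_vector_mult_pow_antimono N]) simp
  have "?R (N + i) = ?R N" for i
  proof (induction i)
    case (Suc i)
    then show ?case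
      by (metis Suc_N add_Suc_right range_matrix_vector_mult_pow_Suc)
  qed simp
  then show ?thesis using that by (metis le_Suc_ex)
qed

lemma eventual_range_eq_range:
  fixes M :: "'a::field^'n^'n"
  obtains N where "eventual_range M = range (matrix_vector_mult M ^^ N)"
    and "\<And>k. N \<le> k \<Longrightarrow> range (matrix_vector_mult M ^^ k) = range (matrix_vector_mult M ^^ N)"
proof -
  obtain N where
    N: "\<And>k. N \<le> k \<Longrightarrow> range (matrix_vector_mult M ^^ k) = range (matrix_vector_mult M ^^ N)"
    using range_matrix_vector_mult_pow_stabilises by blast
  have "range (matrix_vector_mult M ^^ N) \<subseteq> range (matrix_vector_mult M ^^ m)" for m
  proof (cases "m \<le> N")
    case False
    then show ?thesis using N[of m] by simp
  qed (rule range_matrix_vector_mult_pow_antimono)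
  then have "eventual_range M = range (matrix_vector_mult M ^^ N)"
    unfolding eventual_range_def by blast
  then show ?thesis using that N by blast
qed

lemma subspace_eventual_range: "vec.subspace (eventual_range (M :: 'a::field^'n^'n))"
  by (metis eventual_range_eq_range subspace_range_matrix_vector_mult_pow)

lemma image_eventual_range:
  "matrix_vector_mult M ` eventual_range M = eventual_range (M :: 'a::field^'n^'n)"
proof -
  obtain N where "eventual_range M = range (matrix_vector_mult M ^^ N)"
    and "range (matrix_vector_mult M ^^ Suc N) = range (matrix_vector_mult M ^^ N)"
    using eventual_range_eq_range le_SucI by (metis order_refl)
  then show ?thesis by (metis range_matrix_vector_mult_pow_Suc)
qed

lemma inj_on_eventual_range: "inj_on (matrix_vector_mult M) (eventual_range (M :: 'a::field^'n^'n))"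
  by (rule linear_surj_on_imp_inj_on[OF matrix_vector_mul_linear_gen
        subspace_eventual_range image_eventual_range])

lemma eventual_range_pow_eq_zero:
  fixes M :: "'a::field^'n^'n"
  assumes "x \<in> eventual_range M" "(matrix_vector_mult M ^^ k) x = 0"
  shows "x = 0"
  using assms
proof (induction k arbitrary: x)
  case (Suc k)
  have "M *v x \<in> eventual_range M" using Suc.prems(1) image_eventual_range by blast
  then have "M *v x = M *v 0" using Suc by (simp add: funpow_swap1)
  then show ?case
    using inj_on_eventual_range Suc.prems(1) vec.subspace_0[OF subspace_eventual_range]
    by (metis inj_on_contraD)
qed simp

lemma matrix_vector_mult_pow_diff:
  fixes M :: "'a::ring_1^'n^'n"
  shows "(matrix_vector_mult M ^^ t) (x - y) =
    (matrix_vector_mult M ^^ t) x - (matrix_vector_mult M ^^ t) y"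
  by (induction t) (simp_all add: matrix_vector_mult_diff_distrib)

lemma thread_eq_pow:
  fixes M :: "'a::semiring_1^'n^'n"
  assumes "\<forall>n. v n = M *v v (Suc n)"
  shows "v n = (matrix_vector_mult M ^^ t) (v (n + t))"
proof (induction t)
  case (Suc t)
  have "v (n + t) = M *v v (Suc (n + t))" using assms by blast
  with Suc.IH show ?case by (simp add: funpow_Suc_right del: funpow.simps)
qed simp

lemma thread_in_eventual_range:
  fixes M :: "'a::semiring_1^'n^'n"
  assumes "\<forall>n. v n = M *v v (Suc n)"
  shows "v n \<in> eventual_range M"
  unfolding eventual_range_def using thread_eq_pow[OF assms] by (metis INT_I rangeI)

lemma thread_eq_if_head_eq:
  fixes M :: "'a::field^'n^'n"
  assumes u: "\<forall>n. u n = M *v u (Suc n)" and v: "\<forall>n. v n = M *v v (Suc n)" and "u 0 = v 0"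
  shows "u n = v n"
proof (induction n)
  case (Suc n)
  have "M *v u (Suc n) = u n" by (rule spec[OF u, symmetric])
  also have "\<dots> = v n" by (rule Suc.IH)
  also have "\<dots> = M *v v (Suc n)" by (rule spec[OF v])
  finally show ?case
    using inj_onD[OF inj_on_eventual_range]
      thread_in_eventual_range[OF u] thread_in_eventual_range[OF v] by blast
qed (rule assms(3))

lemma eventual_range_has_thread:
  fixes M :: "'a::field^'n^'n"
  assumes x: "x \<in> eventual_range M"
  obtains v where "\<forall>n. v n = M *v v (Suc n)" "v 0 = x"
proof -
  let ?g = "inv_into (eventual_range M) (matrix_vector_mult M)"
  define v where "v k = (?g ^^ k) x" for k
  have v_in: "v k \<in> eventual_range M" for k
  proof (induction k)
    case (Suc k)
    have "v (Suc k) = ?g (v k)" by (simp add: v_def)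
    then show ?case using Suc image_eventual_range by (metis inv_into_into)
  qed (simp add: v_def x)
  have "v k = M *v v (Suc k)" for k
  proof -
    have "v (Suc k) = ?g (v k)" by (simp add: v_def)
    then show ?thesis using v_in[of k] image_eventual_range by (metis f_inv_into_f)
  qed
  moreover have "v 0 = x" by (simp add: v_def)
  ultimately show ?thesis using that by blast
qed

lemma bij_betw_thread_head:
  fixes M :: "'a::field^'n^'n"
  shows "bij_betw (\<lambda>v. v 0) {v. \<forall>n. v n = M *v v (Suc n)} (eventual_range M)"
  unfolding bij_betw_def
proof
  show "inj_on (\<lambda>v. v 0) {v. \<forall>n. v n = M *v v (Suc n)}"
    using thread_eq_if_head_eq by (intro inj_onI ext) blast
  show "(\<lambda>v. v 0) ` {v. \<forall>n. v n = M *v v (Suc n)} = eventual_range M"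
    using thread_in_eventual_range eventual_range_has_thread by (intro equalityI subsetI) blast+
qed

section \<open>Polynomials acting through a matrix\<close>

definition poly_act :: "'a::field^'n^'n \<Rightarrow> 'a poly \<Rightarrow> 'a^'n \<Rightarrow> 'a^'n" where
  "poly_act M p = fold_coeffs (\<lambda>a g v. a *s v + M *v g v) p (\<lambda>v. 0)"

lemma poly_act_0 [simp]: "poly_act M 0 v = 0"
  by (simp add: poly_act_def)

lemma poly_act_pCons [simp]: "poly_act M (pCons a p) v = a *s v + M *v poly_act M p v"
proof (cases "p = 0 \<and> a = 0")
  case False
  then show ?thesis
    by (cases "p = 0") (simp_all add: poly_act_def fold_coeffs_pCons_coeff_not_0_eq
        fold_coeffs_pCons_not_0_0_eq)
qed simp

lemma poly_act_zero_right [simp]: "poly_act M p 0 = 0"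
  by (induction p) simp_all

lemma poly_act_add_right: "poly_act M p (x + y) = poly_act M p x + poly_act M p y"
  by (induction p) (simp_all add: matrix_vector_right_distrib vector_add_ldistrib algebra_simps)

lemma poly_act_add: "poly_act M (p + q) v = poly_act M p v + poly_act M q v"
  by (induction p q rule: poly_induct2)
    (simp_all add: matrix_vector_right_distrib vector_sadd_rdistrib algebra_simps)

lemma poly_act_smult: "poly_act M (smult c p) v = c *s poly_act M p v"
  by (induction p) (simp_all add: vector_scalar_commute vector_smult_assoc vector_add_ldistrib)

lemma poly_act_mult: "poly_act M (p * q) v = poly_act M p (poly_act M q v)"
  by (induction p) (simp_all add: poly_act_add poly_act_smult)

lemma poly_act_1 [simp]: "poly_act M 1 v = v"
  by (simp add: one_pCons)

lemma poly_act_diff: "poly_act M (p - q) v = poly_act M p v - poly_act M q v"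
  by (metis poly_act_add diff_add_cancel eq_diff_eq)

lemma poly_act_sum: "poly_act M (\<Sum>i\<in>I. p i) v = (\<Sum>i\<in>I. poly_act M (p i) v)"
  by (induction I rule: infinite_finite_induct) (simp_all add: poly_act_add)

lemma poly_act_power: "poly_act M (p ^ k) v = (poly_act M p ^^ k) v"
  by (induction k arbitrary: v) (simp_all add: poly_act_mult funpow_swap1)

lemma matrix_vector_mult_mat: "mat e *v (x :: 'a::comm_ring_1^'n) = e *s x"
  by (vector matrix_vector_mult_def mat_def)
    (simp add: if_distrib if_distribR cong del: if_weak_cong)

lemma poly_act_linear_power: "poly_act M ([:-e, 1:] ^ k) v = ((\<lambda>x. (M - mat e) *v x) ^^ k) v"
proof -
  have "poly_act M [:-e, 1:] = (\<lambda>x. (M - mat e) *v x)"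
    by (auto simp: matrix_vector_mult_diff_rdistrib matrix_vector_mult_mat)
  then show ?thesis by (simp add: poly_act_power)
qed

lemma poly_act_X_power: "poly_act M ([:0, 1:] ^ i) v = (matrix_vector_mult M ^^ i) v"
proof -
  have "poly_act M [:0, 1:] = matrix_vector_mult M" by auto
  then show ?thesis by (simp add: poly_act_power)
qed

lemma poly_act_monom: "poly_act M (monom c i) v = c *s (matrix_vector_mult M ^^ i) v"
  by (simp add: monom_altdef poly_act_smult poly_act_X_power)

lemma poly_act_coprime_decompose:
  fixes p q :: "'a::field_gcd poly"
  assumes "coprime p q"
  obtains s t where "\<And>v. v = poly_act M (s * p) v + poly_act M (t * q) v"
proof -
  have "fst (bezout_coefficients p q) * p + snd (bezout_coefficients p q) * q = 1"
    using bezout_coefficients_fst_snd[of p q] assms by simp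
  then show ?thesis using that by (metis poly_act_1 poly_act_add)
qed

lemma coprime_linear_power:
  fixes q :: "'a::field_gcd poly"
  assumes "\<not> [:-a, 1:] dvd q"
  shows "coprime ([:-a, 1:] ^ m) q"
  using prime_elem_imp_coprime[OF prime_elem_linear_field_poly assms] by simp

text \<open>Cayley--Hamilton in its weakest form: the d + 1 vectors v, M v, ..., M^d v
  are linearly dependent.\<close>

lemma annihilating_poly_exists:
  fixes M :: "'a::field^'n^'n"
  obtains p where "p \<noteq> 0" "poly_act M p v = 0"
proof -
  let ?g = "\<lambda>i. (matrix_vector_mult M ^^ i) v"
  let ?d = "CARD('n)"
  show ?thesis
  proof (cases "inj_on ?g {0..?d}")
    case False
    then obtain i j where ij: "i \<noteq> j" "?g i = ?g j" unfolding inj_on_def by blast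
    have "monom 1 i - monom 1 j \<noteq> (0 :: 'a poly)" using ij(1) by (simp add: monom_eq_iff')
    moreover have "poly_act M (monom 1 i - monom 1 j) v = 0"
      using ij(2) by (simp add: poly_act_diff poly_act_monom)
    ultimately show ?thesis by (rule that)
  next
    case True
    let ?P = "?g ` {0..?d}"
    have "vec.dim ?P \<le> ?d"
      using vec.dim_subset_UNIV[of ?P] by (simp add: vec.dimension_def card_cart_basis)
    then have "vec.dependent ?P"
      using True by (intro vec.dependent_biggerset_general) (simp add: card_image)
    then obtain t u where t: "finite t" "t \<subseteq> ?P" "(\<Sum>w\<in>t. u w *s w) = 0" "\<exists>w\<in>t. u w \<noteq> 0"
      unfolding vec.dependent_explicit by blast
    define I where "I = {i\<in>{0..?d}. ?g i \<in> t}"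
    have inj: "inj_on ?g I" and gI: "?g ` I = t"
      using True t(2) unfolding I_def inj_on_def by blast+
    define p where "p = (\<Sum>i\<in>I. monom (u (?g i)) i)"
    have coeff_p: "coeff p j = (if j \<in> I then u (?g j) else 0)" for j
      unfolding p_def coeff_sum by (simp add: I_def if_distrib cong: if_cong)
    obtain j where "j \<in> I" "u (?g j) \<noteq> 0" using t(4) gI by blast
    then have "coeff p j \<noteq> 0" by (simp add: coeff_p)
    then have "p \<noteq> 0" by auto
    moreover have "poly_act M p v = (\<Sum>i\<in>I. u (?g i) *s ?g i)"
      unfolding p_def poly_act_sum poly_act_monom ..
    moreover have "\<dots> = 0"
      using sum.reindex[OF inj, of "\<lambda>w. u w *s w"] gI t(3) by simp
    ultimately show ?thesis using that by simp
  qed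
qed

section \<open>The eventual range as a sum of generalised eigenspaces\<close>

definition gen_eigen_sums :: "complex^'n^'n \<Rightarrow> complex set \<Rightarrow> (complex^'n) set" where
  "gen_eigen_sums M Z = {v. \<exists>S f. finite S \<and> S \<subseteq> Z \<and>
     (\<forall>e\<in>S. f e \<in> gen_eigenspace M e) \<and> v = (\<Sum>e\<in>S. f e)}"

lemma NonN_complex_eq_gen_eigen_sums: "NonN_complex A = gen_eigen_sums (fmat A) (- {0})"
  unfolding NonN_complex_def gen_eigen_sums_def by blast

lemma gen_eigenspace_iff_poly_act:
  "v \<in> gen_eigenspace M e \<longleftrightarrow> (\<exists>k. poly_act M ([:-e, 1:] ^ k) v = 0)"
  by (simp add: gen_eigenspace_def poly_act_linear_power)

lemma gen_eigenspace_add: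
  assumes "a \<in> gen_eigenspace M e" "b \<in> gen_eigenspace M e"
  shows "a + b \<in> gen_eigenspace M e"
proof -
  obtain k l where "poly_act M ([:-e, 1:] ^ k) a = 0" "poly_act M ([:-e, 1:] ^ l) b = 0"
    using assms unfolding gen_eigenspace_iff_poly_act by blast
  then have "poly_act M ([:-e, 1:] ^ (l + k)) a = 0" "poly_act M ([:-e, 1:] ^ (k + l)) b = 0"
    by (simp_all add: power_add poly_act_mult)
  then have "poly_act M ([:-e, 1:] ^ (k + l)) (a + b) = 0"
    by (simp add: poly_act_add_right add.commute)
  then show ?thesis unfolding gen_eigenspace_iff_poly_act by blast
qed

lemma zero_in_gen_eigenspace: "0 \<in> gen_eigenspace M e"
  unfolding gen_eigenspace_iff_poly_act by (metis poly_act_zero_right)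

lemma gen_eigen_sums_mono: "Z \<subseteq> Z' \<Longrightarrow> gen_eigen_sums M Z \<subseteq> gen_eigen_sums M Z'"
  unfolding gen_eigen_sums_def by blast

lemma gen_eigen_sums_add_gen_eigenspace:
  assumes v: "v \<in> gen_eigen_sums M Z" and a: "a \<in> gen_eigenspace M z" and "z \<in> Z"
  shows "v + a \<in> gen_eigen_sums M Z"
proof -
  obtain S f where S: "finite S" "S \<subseteq> Z" "\<forall>e\<in>S. f e \<in> gen_eigenspace M e" "v = (\<Sum>e\<in>S. f e)"
    using v unfolding gen_eigen_sums_def by blast
  define g where "g e = (if e \<in> S then f e else 0) + (if e = z then a else 0)" for e
  have "insert z S \<inter> S = S" by blast
  then have "(\<Sum>e\<in>insert z S. g e) = v + a"
    using S(1) by (simp add: g_def sum.distrib sum.inter_restrict[symmetric] S(4))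
  moreover have "\<forall>e\<in>insert z S. g e \<in> gen_eigenspace M e"
    using S(3) a by (auto simp: g_def zero_in_gen_eigenspace gen_eigenspace_add)
  ultimately show ?thesis
    unfolding gen_eigen_sums_def using S(1,2) \<open>z \<in> Z\<close>
    by (intro CollectI exI[of _ "insert z S"]) auto
qed

text \<open>Primary decomposition: split off the root z of the annihilator p by a Bezout identity
  between (x - z)^m and the cofactor, and induct on the degree.\<close>

lemma annihilated_in_gen_eigen_sums:
  assumes "p \<noteq> 0" "poly_act M p v = 0"
  shows "v \<in> gen_eigen_sums M {z. poly p z = 0}"
  using assms
proof (induction "degree p" arbitrary: p v rule: less_induct)
  case less
  show ?case
  proof (cases "degree p = 0")
    case True
    then obtain c where "p = [:c:]" "c \<noteq> 0" using less.prems(1) by (metis degree_eq_zeroE pCons_0_0)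
    then have "v = 0" using less.prems(2) by (simp add: vec_eq_iff)
    then show ?thesis unfolding gen_eigen_sums_def by (intro CollectI exI[of _ "{}"]) simp
  next
    case False
    then obtain z where z: "poly p z = 0"
      by (metis fundamental_theorem_of_algebra constant_degree)
    define m where "m = order z p"
    obtain q where pq: "p = [:-z, 1:] ^ m * q" and nd: "\<not> [:-z, 1:] dvd q"
      using order_decomp[OF less.prems(1)] unfolding m_def by blast
    have q0: "q \<noteq> 0" using pq less.prems(1) by auto
    have "m \<noteq> 0" using z less.prems(1) order_root unfolding m_def by blast
    moreover have "degree p = m + degree q"
      unfolding pq using q0 by (simp add: degree_mult_eq degree_linear_power)
    ultimately have deg: "degree q < degree p" by simp
    obtain s t where st: "v = poly_act M (s * [:-z, 1:] ^ m) v + poly_act M (t * q) v"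
      using poly_act_coprime_decompose[OF coprime_linear_power[OF nd]] by metis
    have "poly_act M ([:-z, 1:] ^ m) (poly_act M (t * q) v) = poly_act M t (poly_act M p v)"
      unfolding pq by (simp only: poly_act_mult[symmetric] mult_ac)
    then have b: "poly_act M (t * q) v \<in> gen_eigenspace M z"
      unfolding gen_eigenspace_iff_poly_act using less.prems(2) by auto
    have "poly_act M q (poly_act M (s * [:-z, 1:] ^ m) v) = poly_act M s (poly_act M p v)"
      unfolding pq by (simp only: poly_act_mult[symmetric] mult_ac)
    then have "poly_act M (s * [:-z, 1:] ^ m) v \<in> gen_eigen_sums M {z. poly q z = 0}"
      using less.hyps[OF deg q0] less.prems(2) by simp
    also have "\<dots> \<subseteq> gen_eigen_sums M {z. poly p z = 0}"
      by (rule gen_eigen_sums_mono) (auto simp: pq)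
    finally have "poly_act M (s * [:-z, 1:] ^ m) v + poly_act M (t * q) v
        \<in> gen_eigen_sums M {z. poly p z = 0}"
      by (rule gen_eigen_sums_add_gen_eigenspace[OF _ b]) (simp add: z)
    then show ?thesis by (rule ssubst[OF st])
  qed
qed

lemma gen_eigenspace_subset_range:
  assumes "e \<noteq> 0" "x \<in> gen_eigenspace M e"
  shows "x \<in> range (matrix_vector_mult M ^^ m)"
proof -
  obtain k where k: "poly_act M ([:-e, 1:] ^ k) x = 0"
    using assms(2) unfolding gen_eigenspace_iff_poly_act by blast
  have "poly ([:-e, 1:] ^ k) 0 \<noteq> 0" using assms(1) by simp
  then have "\<not> [:-0, 1:] dvd [:-e, 1:] ^ k" by (metis poly_eq_0_iff_dvd)
  then obtain s t
    where st: "x = poly_act M (s * [:-0, 1:] ^ m) x + poly_act M (t * [:-e, 1:] ^ k) x"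
    using poly_act_coprime_decompose[OF coprime_linear_power] by metis
  then have "x = poly_act M ([:0, 1:] ^ m * s) x"
    using k by (simp add: poly_act_mult mult.commute)
  also have "\<dots> = (matrix_vector_mult M ^^ m) (poly_act M s x)"
    by (simp only: poly_act_mult poly_act_X_power)
  finally show ?thesis by blast
qed

lemma poly_act_eventual_range:
  assumes "x \<in> eventual_range M"
  shows "poly_act M p x \<in> eventual_range M"
proof (induction p)
  case (pCons a p)
  then have "M *v poly_act M p x \<in> eventual_range M"
    using image_eventual_range by blast
  then show ?case
    by (simp add: assms vec.subspace_add[OF subspace_eventual_range]
        vec.subspace_scale[OF subspace_eventual_range])
qed (simp add: vec.subspace_0[OF subspace_eventual_range])

lemma eventual_range_eq_gen_eigen_sums: "eventual_range M = gen_eigen_sums M (- {0})"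
proof (intro equalityI subsetI)
  fix v assume v: "v \<in> eventual_range M"
  obtain p where p: "p \<noteq> 0" "poly_act M p v = 0" using annihilating_poly_exists by blast
  obtain q where pq: "p = [:-0, 1:] ^ order 0 p * q" and nd: "\<not> [:-0, 1:] dvd q"
    using order_decomp[OF p(1)] by blast
  have "(matrix_vector_mult M ^^ order 0 p) (poly_act M q v) = 0"
    using p(2) by (subst (asm) pq) (simp add: poly_act_mult poly_act_X_power)
  then have "poly_act M q v = 0"
    by (rule eventual_range_pow_eq_zero[OF poly_act_eventual_range[OF v]])
  then have "v \<in> gen_eigen_sums M {z. poly q z = 0}"
    using p(1) pq by (intro annihilated_in_gen_eigen_sums) auto
  also have "\<dots> \<subseteq> gen_eigen_sums M (- {0})"
    using nd by (intro gen_eigen_sums_mono) (auto simp: poly_eq_0_iff_dvd)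
  finally show "v \<in> gen_eigen_sums M (- {0})" .
next
  fix v assume "v \<in> gen_eigen_sums M (- {0})"
  then obtain S f where S: "S \<subseteq> - {0}" "\<forall>e\<in>S. f e \<in> gen_eigenspace M e" "v = (\<Sum>e\<in>S. f e)"
    unfolding gen_eigen_sums_def by blast
  have "f e \<in> eventual_range M" if "e \<in> S" for e
    using gen_eigenspace_subset_range S that unfolding eventual_range_def by blast
  then show "v \<in> eventual_range M"
    using S(3) vec.subspace_sum[OF subspace_eventual_range] by metis
qed

lemma fmat_mult_complex_of_real:
  "fmat A *v (\<chi> i. complex_of_real (x $ i)) = (\<chi> i. complex_of_real ((fmat A *v x) $ i))"
  by (simp add: vec_eq_iff fmat_def matrix_vector_mult_def)

lemma fmat_mult_Re:
  "fmat A *v (\<chi> i. Re (z $ i)) = (\<chi> i. Re ((fmat A *v z) $ i))"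
  by (simp add: vec_eq_iff fmat_def matrix_vector_mult_def Re_sum)

text \<open>A real vector is an image of a power of a real matrix as soon as it is the image of a
  complex vector: take real parts.\<close>

lemma eventual_range_real_eq_NonN_real: "eventual_range (fmat A) = NonN_real A"
proof -
  let ?c = "\<lambda>x :: real^'n. \<chi> i. complex_of_real (x $ i)"
  let ?re = "\<lambda>z :: complex^'n. \<chi> i. Re (z $ i)"
  have c_pow:
    "(matrix_vector_mult (fmat A) ^^ m) (?c x) = ?c ((matrix_vector_mult (fmat A) ^^ m) x)"
    for m x by (induction m) (simp_all add: fmat_mult_complex_of_real)
  have re_pow:
    "(matrix_vector_mult (fmat A) ^^ m) (?re z) = ?re ((matrix_vector_mult (fmat A) ^^ m) z)"
    for m z by (induction m) (simp_all add: fmat_mult_Re)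
  have re_c: "?re (?c x) = x" for x by (simp add: vec_eq_iff)
  have "x \<in> range (matrix_vector_mult (fmat A) ^^ m) \<longleftrightarrow>
      ?c x \<in> range (matrix_vector_mult (fmat A) ^^ m)" for x m
  proof
    assume "x \<in> range (matrix_vector_mult (fmat A) ^^ m)"
    then obtain y where "x = (matrix_vector_mult (fmat A) ^^ m) y" by blast
    then have "?c x = (matrix_vector_mult (fmat A) ^^ m) (?c y)" by (simp only: c_pow)
    then show "?c x \<in> range (matrix_vector_mult (fmat A) ^^ m)" by (rule range_eqI)
  next
    assume "?c x \<in> range (matrix_vector_mult (fmat A) ^^ m)"
    then obtain z where z: "?c x = (matrix_vector_mult (fmat A) ^^ m) z" by blast
    have "x = ?re (?c x)" by (rule re_c[symmetric])
    also have "\<dots> = (matrix_vector_mult (fmat A) ^^ m) (?re z)" by (simp only: z re_pow)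
    finally show "x \<in> range (matrix_vector_mult (fmat A) ^^ m)" by (rule range_eqI)
  qed
  then have "x \<in> eventual_range (fmat A) \<longleftrightarrow> ?c x \<in> eventual_range (fmat A)" for x
    unfolding eventual_range_def by blast
  then show ?thesis
    unfolding NonN_real_def NonN_complex_eq_gen_eigen_sums
      eventual_range_eq_gen_eigen_sums[symmetric]
    by blast
qed

section \<open>Stafs and threads\<close>

lemma staf_vanishes: "K \<in> staf_space A \<Longrightarrow> \<not> allowable A xs \<Longrightarrow> K xs = 0"
  unfolding staf_space_def by blast

lemma staf_additive:
  "K \<in> staf_space A \<Longrightarrow> allowable A (w @ [j]) \<Longrightarrow>
    K (w @ [j]) = (\<Sum>k\<in>{k. A$j$k = 1}. K (w @ [j, k]))"
  unfolding staf_space_def by blast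

lemma staf_coherent:
  "K \<in> staf_space A \<Longrightarrow> allowable A (w @ [j]) \<Longrightarrow> allowable A (w' @ [j]) \<Longrightarrow>
    length w = length w' \<Longrightarrow> K (w @ [j]) = K (w' @ [j])"
  unfolding staf_space_def by blast

lemma staf_space_add:
  assumes "K \<in> staf_space A" "L \<in> staf_space A"
  shows "(\<lambda>x. K x + L x) \<in> staf_space A"
  unfolding staf_space_def
proof (intro CollectI conjI allI impI)
  fix xs assume "\<not> allowable A xs"
  then show "K xs + L xs = 0" using staf_vanishes[OF assms(1)] staf_vanishes[OF assms(2)] by simp
next
  fix w j assume "allowable A (w @ [j])"
  then show "K (w @ [j]) + L (w @ [j]) = (\<Sum>k\<in>{k. A$j$k = 1}. K (w @ [j, k]) + L (w @ [j, k]))"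
    using staf_additive[OF assms(1)] staf_additive[OF assms(2)] by (simp add: sum.distrib)
next
  fix w w' j assume "allowable A (w @ [j]) \<and> allowable A (w' @ [j]) \<and> length w = length w'"
  then show "K (w @ [j]) + L (w @ [j]) = K (w' @ [j]) + L (w' @ [j])"
    using staf_coherent[OF assms(1), of w j w'] staf_coherent[OF assms(2), of w j w'] by simp
qed

lemma staf_space_scale:
  assumes "K \<in> staf_space A"
  shows "(\<lambda>x. c * K x) \<in> staf_space A"
  unfolding staf_space_def
proof (intro CollectI conjI allI impI)
  fix xs assume "\<not> allowable A xs"
  then show "c * K xs = 0" using staf_vanishes[OF assms] by simp
next
  fix w j assume "allowable A (w @ [j])"
  then show "c * K (w @ [j]) = (\<Sum>k\<in>{k. A$j$k = 1}. c * K (w @ [j, k]))"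
    using staf_additive[OF assms] by (simp add: sum_distrib_left)
next
  fix w w' j assume "allowable A (w @ [j]) \<and> allowable A (w' @ [j]) \<and> length w = length w'"
  then show "c * K (w @ [j]) = c * K (w' @ [j])"
    using staf_coherent[OF assms, of w j w'] by simp
qed

lemma threads_add:
  assumes "u \<in> threads A" "v \<in> threads A"
  shows "(\<lambda>n. u n + v n) \<in> threads A"
proof -
  have "u n + v n = fmat A *v (u (Suc n) + v (Suc n))" for n
  proof -
    have "u n = fmat A *v u (Suc n)" "v n = fmat A *v v (Suc n)"
      using assms unfolding threads_def by blast+
    then show ?thesis by (simp add: matrix_vector_right_distrib)
  qed
  then show ?thesis unfolding threads_def by blast
qed

lemma threads_scale:
  fixes v :: "nat \<Rightarrow> 'f::{field,real_algebra_1}^'n"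
  assumes "v \<in> threads A"
  shows "(\<lambda>n. c *s v n) \<in> threads A"
proof -
  have "c *s v n = fmat A *v (c *s v (Suc n))" for n
  proof -
    have "v n = fmat A *v v (Suc n)" using assms unfolding threads_def by blast
    then show ?thesis by (simp add: vector_scalar_commute)
  qed
  then show ?thesis unfolding threads_def by blast
qed

lemma threads_eq_pow:
  "v \<in> threads A \<Longrightarrow> v n = (matrix_vector_mult (fmat A) ^^ t) (v (n + t))"
  unfolding threads_def by (rule thread_eq_pow) blast

text \<open>Layer m of K: its values on the blocks of length m + 1, well defined by coherence,
  and 0 at the symbols that end no such block.\<close>

definition staf_layer :: "real^'n^'n \<Rightarrow> ('n list \<Rightarrow> 'f::zero) \<Rightarrow> nat \<Rightarrow> 'f^'n" where
  "staf_layer A K m = (\<chi> j. if has_past A m j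
     then K ((SOME w. allowable A (w @ [j]) \<and> length w = m) @ [j]) else 0)"

lemma staf_layer_nth:
  assumes "K \<in> staf_space A" "allowable A (w @ [j])"
  shows "staf_layer A K (length w) $ j = K (w @ [j])"
proof -
  have ex: "\<exists>w'. allowable A (w' @ [j]) \<and> length w' = length w" using assms(2) by blast
  let ?w = "SOME w'. allowable A (w' @ [j]) \<and> length w' = length w"
  have "allowable A (?w @ [j]) \<and> length ?w = length w" by (rule someI_ex[OF ex])
  then have "K (?w @ [j]) = K (w @ [j])"
    using staf_coherent[OF assms(1), of ?w j w] assms(2) by blast
  moreover have "has_past A (length w) j" unfolding has_past_def by (rule ex)
  ultimately show ?thesis by (simp add: staf_layer_def)
qed

definition staf_thread :: "real^'n^'n \<Rightarrow> ('n list \<Rightarrow> 'f::real_algebra_1) \<Rightarrow> nat \<Rightarrow> 'f^'n" where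
  "staf_thread A K n = (matrix_vector_mult (fmat A) ^^ CARD('n)) (staf_layer A K (n + CARD('n)))"

definition staf_of_thread :: "real^'n^'n \<Rightarrow> (nat \<Rightarrow> 'f^'n) \<Rightarrow> 'n list \<Rightarrow> 'f::zero" where
  "staf_of_thread A v xs = (if allowable A xs then v (length xs - 1) $ last xs else 0)"

context
  fixes A :: "real^'n^'n"
  assumes zero_one: "\<forall>i j. A$i$j = 0 \<or> A$i$j = 1"
begin

lemma fmat_mult_vec_nth:
  "(fmat A *v (y :: 'f::real_algebra_1^'n)) $ j = (\<Sum>k\<in>{k. A$j$k = 1}. y $ k)"
proof -
  have "(fmat A *v y) $ j = (\<Sum>k\<in>UNIV. of_real (A$j$k) * y $ k)"
    by (simp add: fmat_def matrix_vector_mult_def)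
  also have "\<dots> = (\<Sum>k\<in>{k. A$j$k = 1}. of_real (A$j$k) * y $ k)"
    by (intro sum.mono_neutral_right) (auto, metis zero_one of_real_0 mult_zero_left)
  finally show ?thesis by simp
qed

lemma fmat_pow_nth_eq_zero:
  assumes "\<And>b. allowable A b \<Longrightarrow> length b = Suc t \<Longrightarrow> hd b = j \<Longrightarrow> y $ last b = 0"
  shows "((matrix_vector_mult (fmat A) ^^ t) (y :: 'f::real_algebra_1^'n)) $ j = 0"
  using assms
proof (induction t arbitrary: j)
  case 0
  have "allowable A [j]" by (simp add: allowable_def)
  then show ?case using 0 by fastforce
next
  case (Suc t)
  have "((matrix_vector_mult (fmat A) ^^ t) y) $ k = 0" if "A$j$k = 1" for k
  proof (rule Suc.IH)
    fix b assume b: "allowable A b" "length b = Suc t" "hd b = k"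
    then have "b \<noteq> []" by auto
    then have "allowable A (j # b)"
      using b that unfolding allowable_iff_successively by (cases b) auto
    then show "y $ last b = 0" using Suc.prems[of "j # b"] b \<open>b \<noteq> []\<close> by simp
  qed
  then show ?case by (simp add: fmat_mult_vec_nth)
qed

lemma fmat_pow_card_eq_zero:
  assumes "\<And>k. has_past A m k \<Longrightarrow> y $ k = 0"
  shows "(matrix_vector_mult (fmat A) ^^ CARD('n)) (y :: 'f::real_algebra_1^'n) = 0"
proof -
  have "((matrix_vector_mult (fmat A) ^^ CARD('n)) y) $ j = 0" for j
  proof (rule fmat_pow_nth_eq_zero)
    fix b assume "allowable A b" "length b = Suc CARD('n)"
    then show "y $ last b = 0" using assms has_past_last_of_long_block[of A b m] by simp
  qed
  then show ?thesis by (simp add: vec_eq_iff)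
qed

lemma threads_represents_unique:
  assumes "u \<in> threads A" "v \<in> threads A" "represents A K u" "represents A K v"
  shows "u = (v :: nat \<Rightarrow> 'f::real_algebra_1^'n)"
proof
  fix n
  let ?d = "CARD('n)"
  have "(u (n + ?d) - v (n + ?d)) $ k = 0" if past: "has_past A (n + ?d) k" for k
  proof -
    obtain w where "allowable A (w @ [k])" "length w = n + ?d"
      using past unfolding has_past_def by blast
    then have "u (n + ?d) $ k = K (w @ [k])" "v (n + ?d) $ k = K (w @ [k])"
      using assms(3,4) unfolding represents_def by blast+
    then show ?thesis by simp
  qed
  then have "(matrix_vector_mult (fmat A) ^^ ?d) (u (n + ?d) - v (n + ?d)) = 0"
    by (rule fmat_pow_card_eq_zero)
  then show "u n = v n"
    using threads_eq_pow[OF assms(1)] threads_eq_pow[OF assms(2)]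
    by (simp add: matrix_vector_mult_pow_diff)
qed

lemma fmat_pow_staf_layer_nth:
  assumes "K \<in> staf_space A" "allowable A (w @ [j])"
  shows "((matrix_vector_mult (fmat A) ^^ t) (staf_layer A K (length w + t))) $ j
    = (K (w @ [j]) :: 'f::{field,real_algebra_1})"
  using assms(2)
proof (induction t arbitrary: w j)
  case 0
  then show ?case using staf_layer_nth[OF assms(1)] by simp
next
  case (Suc t)
  have "((matrix_vector_mult (fmat A) ^^ t) (staf_layer A K (length (w @ [j]) + t))) $ k
      = K (w @ [j, k])" if "A$j$k = 1" for k
    using Suc.IH[of "w @ [j]" k] Suc.prems that
    by (simp add: allowable_iff_successively successively_append_iff)
  then show ?case
    using staf_additive[OF assms(1) Suc.prems] by (simp add: fmat_mult_vec_nth)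
qed

lemma staf_thread_represents:
  "K \<in> staf_space A \<Longrightarrow> represents A K (staf_thread A K :: nat \<Rightarrow> 'f::{field,real_algebra_1}^'n)"
  unfolding represents_def staf_thread_def using fmat_pow_staf_layer_nth by blast

lemma staf_thread_in_threads:
  assumes "K \<in> staf_space A"
  shows "(staf_thread A K :: nat \<Rightarrow> 'f::{field,real_algebra_1}^'n) \<in> threads A"
  unfolding threads_def
proof (intro CollectI allI)
  fix n
  let ?d = "CARD('n)" and ?F = "matrix_vector_mult (fmat A) :: 'f^'n \<Rightarrow> 'f^'n"
  let ?y = "fmat A *v staf_layer A K (Suc (n + ?d)) - staf_layer A K (n + ?d)"
  have "?y $ k = 0" if past: "has_past A (n + ?d) k" for k
  proof -
    obtain w where w: "allowable A (w @ [k])" "length w = n + ?d"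
      using past unfolding has_past_def by blast
    show ?thesis
      using fmat_pow_staf_layer_nth[OF assms w(1), of 1] staf_layer_nth[OF assms w(1)] w(2) by simp
  qed
  then have "(?F ^^ ?d) ?y = 0" by (rule fmat_pow_card_eq_zero)
  then show "staf_thread A K n = fmat A *v staf_thread A K (Suc n)"
    by (simp add: staf_thread_def matrix_vector_mult_pow_diff funpow_swap1)
qed

lemma thread_of_unique:
  "K \<in> staf_space A \<Longrightarrow>
    \<exists>!v. v \<in> threads A \<and> represents A K (v :: nat \<Rightarrow> 'f::{field,real_algebra_1}^'n)"
  using staf_thread_in_threads staf_thread_represents threads_represents_unique by blast

lemma thread_of_eqI:
  assumes "K \<in> staf_space A" "v \<in> threads A"
    and "represents A K (v :: nat \<Rightarrow> 'f::{field,real_algebra_1}^'n)"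
  shows "thread_of A K = v"
  unfolding thread_of_def
  by (rule the1_equality[OF thread_of_unique[OF assms(1)]]) (use assms(2,3) in blast)

lemma thread_of_in_threads:
  "K \<in> staf_space A \<Longrightarrow> (thread_of A K :: nat \<Rightarrow> 'f::{field,real_algebra_1}^'n) \<in> threads A"
  using thread_of_eqI staf_thread_in_threads staf_thread_represents by metis

lemma represents_thread_of:
  "K \<in> staf_space A \<Longrightarrow> represents A K (thread_of A K :: nat \<Rightarrow> 'f::{field,real_algebra_1}^'n)"
  using thread_of_eqI staf_thread_in_threads staf_thread_represents by metis

lemma thread_of_add:
  fixes K L :: "'n list \<Rightarrow> 'f::{field,real_algebra_1}"
  assumes "K \<in> staf_space A" "L \<in> staf_space A"
  shows "thread_of A (\<lambda>x. K x + L x) = (\<lambda>n. thread_of A K n + thread_of A L n)"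
  using represents_thread_of[OF assms(1)] represents_thread_of[OF assms(2)]
  by (intro thread_of_eqI staf_space_add threads_add thread_of_in_threads assms)
    (simp add: represents_def)

lemma thread_of_scale:
  fixes K :: "'n list \<Rightarrow> 'f::{field,real_algebra_1}"
  assumes "K \<in> staf_space A"
  shows "thread_of A (\<lambda>x. c * K x) = (\<lambda>n. c *s thread_of A K n)"
  using represents_thread_of[OF assms]
  by (intro thread_of_eqI staf_space_scale threads_scale thread_of_in_threads assms)
    (simp add: represents_def)

lemma thread_of_inj:
  fixes K L :: "'n list \<Rightarrow> 'f::{field,real_algebra_1}"
  assumes "K \<in> staf_space A" "L \<in> staf_space A" "thread_of A K = thread_of A L"
  shows "K = L"
proof
  fix xs
  show "K xs = L xs"
  proof (cases "allowable A xs")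
    case True
    then have "xs = butlast xs @ [last xs]" by (simp add: allowable_def)
    then show ?thesis
      using True represents_thread_of[OF assms(1)] represents_thread_of[OF assms(2)] assms(3)
      unfolding represents_def by metis
  qed (simp add: staf_vanishes[OF assms(1)] staf_vanishes[OF assms(2)])
qed

lemma staf_of_thread_in_staf_space:
  assumes "v \<in> threads A"
  shows "staf_of_thread A (v :: nat \<Rightarrow> 'f::{field,real_algebra_1}^'n) \<in> staf_space A"
  unfolding staf_space_def
proof (intro CollectI conjI allI impI)
  fix w j assume wj: "allowable A (w @ [j])"
  have "v (length w) = fmat A *v v (Suc (length w))" using assms unfolding threads_def by blast
  then have "v (length w) $ j = (\<Sum>k\<in>{k. A$j$k = 1}. v (Suc (length w)) $ k)"
    by (simp add: fmat_mult_vec_nth)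
  moreover have "allowable A (w @ [j, k])" if "A$j$k = 1" for k
    using wj that by (simp add: allowable_iff_successively successively_append_iff)
  ultimately show "staf_of_thread A v (w @ [j]) =
      (\<Sum>k\<in>{k. A$j$k = 1}. staf_of_thread A v (w @ [j, k]))"
    using wj by (simp add: staf_of_thread_def)
qed (simp_all add: staf_of_thread_def)

lemma thread_of_staf_of_thread:
  "v \<in> threads A \<Longrightarrow> thread_of A (staf_of_thread A v) = (v :: nat \<Rightarrow> 'f::{field,real_algebra_1}^'n)"
  by (rule thread_of_eqI[OF staf_of_thread_in_staf_space])
    (simp_all add: represents_def staf_of_thread_def)

lemma bij_betw_thread_of:
  "bij_betw (thread_of A) (staf_space A :: ('n list \<Rightarrow> 'f::{field,real_algebra_1}) set) (threads A)"
proof (rule bij_betw_imageI)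
  show "inj_on (thread_of A) (staf_space A :: ('n list \<Rightarrow> 'f) set)"
    using thread_of_inj by (blast intro: inj_onI)
  have "v \<in> thread_of A ` (staf_space A :: ('n list \<Rightarrow> 'f) set)" if "v \<in> threads A" for v
    using thread_of_staf_of_thread[OF that] staf_of_thread_in_staf_space[OF that]
    by (metis image_eqI)
  then show "thread_of A ` (staf_space A :: ('n list \<Rightarrow> 'f) set) = threads A"
    using thread_of_in_threads by blast
qed

end

lemma staf_thread_claim_eventual_range:
  fixes A :: "real^'n^'n"
  assumes "\<forall>i j. A$i$j = 0 \<or> A$i$j = 1"
  shows "staf_thread_claim A (eventual_range (fmat A) :: ('f::{field,real_algebra_1}^'n) set)"
  unfolding staf_thread_claim_def
proof (intro conjI ballI allI exI[of _ "\<lambda>v. v 0"])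
  show "bij_betw (\<lambda>v. v 0) (threads A) (eventual_range (fmat A) :: ('f^'n) set)"
    unfolding threads_def by (rule bij_betw_thread_head)
qed (simp_all add: assms thread_of_unique thread_of_add thread_of_scale bij_betw_thread_of)

theorem fact8p2:
  fixes A :: "real^'n^'n"
  assumes "\<forall>i j. A$i$j = 0 \<or> A$i$j = 1"
  shows "staf_thread_claim A (NonN_real A) \<and> staf_thread_claim A (NonN_complex A)"
proof
  show "staf_thread_claim A (NonN_real A)"
    using staf_thread_claim_eventual_range[OF assms, where 'f = real]
    by (simp add: eventual_range_real_eq_NonN_real)
  show "staf_thread_claim A (NonN_complex A)"
    using staf_thread_claim_eventual_range[OF assms, where 'f = complex]
    by (simp add: NonN_complex_eq_gen_eigen_sums eventual_range_eq_gen_eigen_sums)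
qed

end
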